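(* Let $(\mathcal H,\mathfrak A_0)$ be a Hilbert quasi *-algebra admitting a norm-continuous module function $\mu$ with $\mu(\mathfrak A_0)\subseteq\mathfrak A_0^+$. Then every w-positive element is the limit of a sequence of elements of $\mathfrak A_0^+$; i.e. $\mathcal H^+=\mathcal H^+_w$.
   Context: A Hilbert algebra is a *-algebra $\mathfrak A_0$ with an inner product $\langle\cdot,\cdot\rangle$ such that (i) for each $x$, $y\mapsto xy$ is continuous for the inner product norm; (ii) $\langle xy,z\rangle=\langle y,x^*z\rangle$ for all $x,y,z$; (iii) $\langle x,y\rangle=\langle y^*,x^*\rangle$ for all $x,y$; (iv) the linear span of $\{xy:x,y\in\mathfrak A_0\}$ is dense in $\mathfrak A_0$. Let $\mathcal H$ be the Hilbert space completion of $\mathfrak A_0$; the involution extends isometrically to $\mathcal H$, and the products $\xi x$, $x\xi$ for $\xi\in\mathcal H$, $x\in\mathfrak A_0$ are defined by continuity. It is assumed that (A): if $\xi\in\mathcal H$ and $\xi x=0$ for all $x\in\mathfrak A_0$ then $\xi=0$. With these operations $(\mathcal H,\mathfrak A_0)$ is called a Hilbert quasi *-algebra. $\mathfrak A_0^+=\{\sum_{k=1}^n x_k^*x_k: x_k\in\mathfrak A_0,n\in\mathbb N\}$, $\mathcal H^+$ is its norm closure in $\mathcal H$, and $\mathcal H^+_w=\{\xi\in\mathcal H:\langle\xi x,x\rangle\ge0\ \forall x\in\mathfrak A_0\}$ (w-positive elements). A module function is a map $\mu:\mathcal H\to\mathcal H$ with (i) $\mu(\xi)\in\mathcal H^+_w$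 for all $\xi$; (ii) $\mu(\xi)=\xi$ for all $\xi\in\mathcal H^+_w$; (iii) $\|\mu(\xi)\|=\|\xi\|$ for all $\xi$. *)

theory Defs
  imports Complex_Main "HOL-Library.Complex_Order"
begin

text \<open>
  A Hilbert quasi *-algebra (H, A0) is represented by:
  the carrier type 'h (= the Hilbert space H), a complex scalar multiplication sc,
  a complex inner product ip (linear in the first, conjugate-linear in the second argument),
  the dense *-subalgebra A0 (a subset of 'h), a multiplication mult and an involution invol.
  mult is the algebra product on A0 x A0; for x in A0 the maps (xi |-> mult xi x) and
  (xi |-> mult x xi) are the continuous extensions to H; invol is the isometric extension of
  the involution to H.
\<close>

definition hnorm :: "('h \<Rightarrow> 'h \<Rightarrow> complex) \<Rightarrow> 'h \<Rightarrow> real" where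
  "hnorm ip x = sqrt (Re (ip x x))"

locale hilbert_quasi_star_algebra =
  fixes A0 :: "'h::ab_group_add set"
    and sc :: "complex \<Rightarrow> 'h \<Rightarrow> 'h"
    and ip :: "'h \<Rightarrow> 'h \<Rightarrow> complex"
    and mult :: "'h \<Rightarrow> 'h \<Rightarrow> 'h"
    and invol :: "'h \<Rightarrow> 'h"
  assumes
    sc_add_right: "\<And>a x y. sc a (x + y) = sc a x + sc a y"
  and sc_add_left: "\<And>a b x. sc (a + b) x = sc a x + sc b x"
  and sc_sc: "\<And>a b x. sc a (sc b x) = sc (a * b) x"
  and sc_one: "\<And>x. sc 1 x = x"
  and ip_add_left: "\<And>x y z. ip (x + y) z = ip x z + ip y z"
  and ip_sc_left: "\<And>a x y. ip (sc a x) y = a * ip x y"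
  and ip_conj: "\<And>x y. ip y x = cnj (ip x y)"
  and ip_pos: "\<And>x. 0 \<le> ip x x"
  and ip_definite: "\<And>x. ip x x = 0 \<Longrightarrow> x = 0"
  and complete: "\<And>X. (\<forall>e>0. \<exists>N. \<forall>m\<ge>N. \<forall>n\<ge>N. hnorm ip (X m - X n) < e) \<Longrightarrow>
                     \<exists>l. (\<lambda>n. hnorm ip (X n - l)) \<longlonglongrightarrow> 0"
  and A0_zero: "0 \<in> A0"
  and A0_add: "\<And>x y. x \<in> A0 \<Longrightarrow> y \<in> A0 \<Longrightarrow> x + y \<in> A0"
  and A0_sc: "\<And>a x. x \<in> A0 \<Longrightarrow> sc a x \<in> A0"
  and A0_dense: "\<And>\<xi> e. e > 0 \<Longrightarrow> \<exists>x\<in>A0. hnorm ip (\<xi> - x) < e"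
  and mult_closed: "\<And>x y. x \<in> A0 \<Longrightarrow> y \<in> A0 \<Longrightarrow> mult x y \<in> A0"
  and mult_assoc: "\<And>x y z. x \<in> A0 \<Longrightarrow> y \<in> A0 \<Longrightarrow> z \<in> A0 \<Longrightarrow>
                      mult (mult x y) z = mult x (mult y z)"
  and mult_sc_left: "\<And>a x y. x \<in> A0 \<Longrightarrow> y \<in> A0 \<Longrightarrow> mult (sc a x) y = sc a (mult x y)"
  and mult_sc_right: "\<And>a x y. x \<in> A0 \<Longrightarrow> y \<in> A0 \<Longrightarrow> mult x (sc a y) = sc a (mult x y)"
  and inv_closed: "\<And>x. x \<in> A0 \<Longrightarrow> invol x \<in> A0"
  and inv_sc: "\<And>a x. x \<in> A0 \<Longrightarrow> invol (sc a x) = sc (cnj a) (invol x)"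
  and inv_inv: "\<And>x. x \<in> A0 \<Longrightarrow> invol (invol x) = x"
  and inv_mult: "\<And>x y. x \<in> A0 \<Longrightarrow> y \<in> A0 \<Longrightarrow> invol (mult x y) = mult (invol y) (invol x)"
  and left_mult_bounded: "\<And>x. x \<in> A0 \<Longrightarrow> \<exists>C. \<forall>y\<in>A0. hnorm ip (mult x y) \<le> C * hnorm ip y"
  and ip_mult: "\<And>x y z. x \<in> A0 \<Longrightarrow> y \<in> A0 \<Longrightarrow> z \<in> A0 \<Longrightarrow>
                   ip (mult x y) z = ip y (mult (invol x) z)"
  and ip_inv: "\<And>x y. x \<in> A0 \<Longrightarrow> y \<in> A0 \<Longrightarrow> ip x y = ip (invol y) (invol x)"
  and products_dense: "\<And>z e. z \<in> A0 \<Longrightarrow> e > 0 \<Longrightarrow>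
       \<exists>(n::nat) xs ys. (\<forall>k<n. xs k \<in> A0 \<and> ys k \<in> A0) \<and>
                 hnorm ip (z - (\<Sum>k<n. mult (xs k) (ys k))) < e"
  and inv_add: "\<And>\<xi> \<eta>. invol (\<xi> + \<eta>) = invol \<xi> + invol \<eta>"
  and inv_isometric: "\<And>\<xi>. hnorm ip (invol \<xi>) = hnorm ip \<xi>"
  and mult_add_left: "\<And>\<xi> \<eta> x. x \<in> A0 \<Longrightarrow> mult (\<xi> + \<eta>) x = mult \<xi> x + mult \<eta> x"
  and mult_add_right: "\<And>\<xi> \<eta> x. x \<in> A0 \<Longrightarrow> mult x (\<xi> + \<eta>) = mult x \<xi> + mult x \<eta>"
  and right_mult_ext_bounded: "\<And>x. x \<in> A0 \<Longrightarrow> \<exists>C. \<forall>\<xi>. hnorm ip (mult \<xi> x) \<le> C * hnorm ip \<xi>"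
  and left_mult_ext_bounded: "\<And>x. x \<in> A0 \<Longrightarrow> \<exists>C. \<forall>\<xi>. hnorm ip (mult x \<xi>) \<le> C * hnorm ip \<xi>"
  and condA: "\<And>\<xi>. (\<forall>x\<in>A0. mult \<xi> x = 0) \<Longrightarrow> \<xi> = 0"

definition A0_plus :: "'h::ab_group_add set \<Rightarrow> ('h \<Rightarrow> 'h \<Rightarrow> 'h) \<Rightarrow> ('h \<Rightarrow> 'h) \<Rightarrow> 'h set" where
  "A0_plus A0 mult invol =
     {\<Sum>k<n. mult (invol (xs k)) (xs k) | (n::nat) xs. n \<ge> 1 \<and> (\<forall>k<n. xs k \<in> A0)}"

definition H_plus :: "'h::ab_group_add set \<Rightarrow> ('h \<Rightarrow> 'h \<Rightarrow> complex) \<Rightarrow> ('h \<Rightarrow> 'h \<Rightarrow> 'h) \<Rightarrow> ('h \<Rightarrow> 'h) \<Rightarrow> 'h set" where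
  "H_plus A0 ip mult invol =
     {\<xi>. \<exists>X. (\<forall>n. X n \<in> A0_plus A0 mult invol) \<and> (\<lambda>n. hnorm ip (X n - \<xi>)) \<longlonglongrightarrow> 0}"

definition H_plus_w :: "'h set \<Rightarrow> ('h \<Rightarrow> 'h \<Rightarrow> complex) \<Rightarrow> ('h \<Rightarrow> 'h \<Rightarrow> 'h) \<Rightarrow> 'h set" where
  "H_plus_w A0 ip mult = {\<xi>. \<forall>x\<in>A0. 0 \<le> ip (mult \<xi> x) x}"

definition module_function :: "'h::ab_group_add set \<Rightarrow> ('h \<Rightarrow> 'h \<Rightarrow> complex) \<Rightarrow> ('h \<Rightarrow> 'h \<Rightarrow> 'h) \<Rightarrow> ('h \<Rightarrow> 'h) \<Rightarrow> bool" where
  "module_function A0 ip mult \<mu> \<longleftrightarrow>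
     (\<forall>\<xi>. \<mu> \<xi> \<in> H_plus_w A0 ip mult) \<and>
     (\<forall>\<xi>\<in>H_plus_w A0 ip mult. \<mu> \<xi> = \<xi>) \<and>
     (\<forall>\<xi>. hnorm ip (\<mu> \<xi>) = hnorm ip \<xi>)"

definition norm_continuous :: "('h::ab_group_add \<Rightarrow> 'h \<Rightarrow> complex) \<Rightarrow> ('h \<Rightarrow> 'h) \<Rightarrow> bool" where
  "norm_continuous ip f \<longleftrightarrow>
     (\<forall>\<xi>. \<forall>e>0. \<exists>d>0. \<forall>\<eta>. hnorm ip (\<eta> - \<xi>) < d \<longrightarrow> hnorm ip (f \<eta> - f \<xi>) < e)"

end

theory Submission
  imports Defs
begin

text \<open>
  For fixed x in A0 the map xi |-> <xi x, x> is norm continuous (Cauchy-Schwarz and boundedness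
  of right multiplication by x), so the positivity of this form passes to norm limits and every
  element of H+ is w-positive.  Conversely, approximate a w-positive xi by x_n in A0.  Then
  mu(x_n) lies in A0+ and, since mu is continuous and fixes xi, mu(x_n) tends to xi.
\<close>

lemma complex_nonneg_limit:
  fixes w :: "nat \<Rightarrow> complex"
  assumes "w \<longlonglongrightarrow> z" and "\<And>n. 0 \<le> w n"
  shows "0 \<le> z"
proof -
  have "0 \<le> Re z"
    using tendsto_Re[OF assms(1)] assms(2)
    by (intro LIMSEQ_le_const) (auto simp: less_eq_complex_def)
  moreover have "Im z = 0"
  proof -
    have "(\<lambda>n. Im (w n)) = (\<lambda>n. 0)"
      using assms(2) by (simp add: less_eq_complex_def)
    then show ?thesis
      using tendsto_Im[OF assms(1)] LIMSEQ_unique[OF _ tendsto_const] by metis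
  qed
  ultimately show ?thesis
    by (simp add: less_eq_complex_def)
qed

context hilbert_quasi_star_algebra
begin

lemma ip_zero_left: "ip 0 y = 0"
  using ip_add_left[of 0 0 y] by simp

lemma ip_zero_right: "ip x 0 = 0"
  using ip_conj[of 0 x] by (simp add: ip_zero_left)

lemma ip_minus_left: "ip (- x) y = - ip x y"
  using ip_add_left[of x "- x" y] by (simp add: ip_zero_left eq_neg_iff_add_eq_0 add.commute)

lemma ip_diff_left: "ip (x - z) y = ip x y - ip z y"
  using ip_add_left[of x "- z" y] by (simp add: ip_minus_left)

lemma ip_add_right: "ip x (y + z) = ip x y + ip x z"
  by (metis ip_conj ip_add_left complex_cnj_add)

lemma ip_sc_right: "ip x (sc a y) = cnj a * ip x y"
  by (metis ip_conj ip_sc_left complex_cnj_mult)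

lemma ip_minus_right: "ip x (- y) = - ip x y"
  by (metis ip_conj ip_minus_left complex_cnj_minus)

lemma ip_self_eq_hnorm_square: "ip x x = complex_of_real ((hnorm ip x)\<^sup>2)"
  using ip_pos[of x] by (simp add: hnorm_def less_eq_complex_def complex_eq_iff)

lemma hnorm_nonneg: "0 \<le> hnorm ip x"
  using ip_pos[of x] by (simp add: hnorm_def less_eq_complex_def)

lemma hnorm_minus_commute: "hnorm ip (a - b) = hnorm ip (b - a)"
  by (metis hnorm_def ip_minus_left ip_minus_right minus_diff_eq minus_minus)

lemma cauchy_schwarz: "cmod (ip y x) \<le> hnorm ip y * hnorm ip x"
proof (cases "x = 0")
  case True
  then show ?thesis by (simp add: ip_zero_right hnorm_nonneg)
next
  case False
  define c where "c = ip y x"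
  define N where "N = (hnorm ip x)\<^sup>2"
  have "N \<noteq> 0"
    using False ip_definite[of x] by (auto simp: N_def ip_self_eq_hnorm_square)
  then have N: "0 < N"
    by (simp add: N_def)
  \<comment> \<open>expand \<langle>y - (c/N) x, y - (c/N) x\<rangle> \<ge> 0\<close>
  define s where "s = - (c / of_real N)"
  have "ip (y + sc s x) (y + sc s x) = ip y y + cnj s * c + s * cnj c + s * cnj s * ip x x"
    by (simp add: ip_add_left ip_add_right ip_sc_left ip_sc_right ip_conj[of y x] c_def
        algebra_simps)
  also have "\<dots> = ip y y - c * cnj c / of_real N"
    using N by (simp add: s_def N_def ip_self_eq_hnorm_square field_simps power2_eq_square)
  also have "\<dots> = of_real ((hnorm ip y)\<^sup>2 - (cmod c)\<^sup>2 / N)"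
    by (simp add: ip_self_eq_hnorm_square complex_norm_square[symmetric] of_real_divide)
  finally have "0 \<le> (hnorm ip y)\<^sup>2 - (cmod c)\<^sup>2 / N"
    using ip_pos[of "y + sc s x"] by (simp add: less_eq_complex_def)
  then have "(cmod c)\<^sup>2 \<le> (hnorm ip y * hnorm ip x)\<^sup>2"
    using N by (simp add: N_def field_simps power_mult_distrib)
  then show ?thesis
    using hnorm_nonneg by (simp add: c_def abs_le_square_iff)
qed

lemma mult_zero_left: "x \<in> A0 \<Longrightarrow> mult 0 x = 0"
  using mult_add_left[of x 0 0] by simp

lemma mult_diff_left: "x \<in> A0 \<Longrightarrow> mult (\<xi> - \<eta>) x = mult \<xi> x - mult \<eta> x"
  using mult_add_left[of x "\<xi> - \<eta>" \<eta>] by (simp add: eq_diff_eq)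

lemma mult_sum_left: "x \<in> A0 \<Longrightarrow> mult (\<Sum>k<(n::nat). f k) x = (\<Sum>k<n. mult (f k) x)"
  by (induction n) (simp_all add: mult_zero_left mult_add_left)

lemma ip_sum_left: "ip (\<Sum>k<(n::nat). f k) y = (\<Sum>k<n. ip (f k) y)"
  by (induction n) (simp_all add: ip_zero_left ip_add_left)

lemma A0_plus_subset_H_plus_w: "A0_plus A0 mult invol \<subseteq> H_plus_w A0 ip mult"
proof
  fix p assume "p \<in> A0_plus A0 mult invol"
  then obtain n ys where p: "p = (\<Sum>k<(n::nat). mult (invol (ys k)) (ys k))"
    and ys: "\<forall>k<n. ys k \<in> A0"
    unfolding A0_plus_def by force
  have "0 \<le> ip (mult p x) x" if x: "x \<in> A0" for x
  proof -
    have "ip (mult (mult (invol y) y) x) x = ip (mult y x) (mult y x)" if "y \<in> A0" for y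
      using that x by (simp add: mult_assoc ip_mult inv_closed mult_closed inv_inv)
    then have "ip (mult p x) x = (\<Sum>k<n. ip (mult (ys k) x) (mult (ys k) x))"
      using ys by (simp add: p mult_sum_left[OF x] ip_sum_left)
    moreover have "0 \<le> (\<Sum>k<n. ip (mult (ys k) x) (mult (ys k) x))"
      by (intro sum_nonneg ip_pos)
    ultimately show ?thesis
      by simp
  qed
  then show "p \<in> H_plus_w A0 ip mult"
    unfolding H_plus_w_def by blast
qed

lemma tendsto_ip_mult_right:
  assumes x: "x \<in> A0" and lim: "(\<lambda>n. hnorm ip (X n - \<xi>)) \<longlonglongrightarrow> 0"
  shows "(\<lambda>n. ip (mult (X n) x) x) \<longlonglongrightarrow> ip (mult \<xi> x) x"
proof -
  obtain C where C: "\<And>\<eta>. hnorm ip (mult \<eta> x) \<le> C * hnorm ip \<eta>"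
    using right_mult_ext_bounded[OF x] by blast
  have bound:
    "cmod (ip (mult (X n) x) x - ip (mult \<xi> x) x) \<le> C * hnorm ip x * hnorm ip (X n - \<xi>)" for n
  proof -
    have "cmod (ip (mult (X n) x) x - ip (mult \<xi> x) x) = cmod (ip (mult (X n - \<xi>) x) x)"
      by (simp add: mult_diff_left[OF x] ip_diff_left)
    also have "\<dots> \<le> hnorm ip (mult (X n - \<xi>) x) * hnorm ip x"
      by (rule cauchy_schwarz)
    also have "\<dots> \<le> C * hnorm ip (X n - \<xi>) * hnorm ip x"
      by (rule mult_right_mono[OF C hnorm_nonneg])
    finally show ?thesis
      by (simp add: algebra_simps)
  qed
  have "(\<lambda>n. ip (mult (X n) x) x - ip (mult \<xi> x) x) \<longlonglongrightarrow> 0"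
  proof (rule tendsto_0_le[where K = 1])
    show "(\<lambda>n. C * hnorm ip x * hnorm ip (X n - \<xi>)) \<longlonglongrightarrow> 0"
      using tendsto_mult_right_zero[OF lim] .
    show "\<forall>\<^sub>F n in sequentially. norm (ip (mult (X n) x) x - ip (mult \<xi> x) x)
        \<le> norm (C * hnorm ip x * hnorm ip (X n - \<xi>)) * 1"
      by (intro always_eventually allI)
        (metis bound abs_ge_self order_trans real_norm_def mult_1_right)
  qed
  then show ?thesis
    by (simp add: LIM_zero_iff)
qed

lemma H_plus_subset_H_plus_w: "H_plus A0 ip mult invol \<subseteq> H_plus_w A0 ip mult"
proof
  fix \<xi> assume "\<xi> \<in> H_plus A0 ip mult invol"
  then obtain X where X: "\<And>n. X n \<in> A0_plus A0 mult invol"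
    and lim: "(\<lambda>n. hnorm ip (X n - \<xi>)) \<longlonglongrightarrow> 0"
    unfolding H_plus_def by blast
  have "0 \<le> ip (mult \<xi> x) x" if x: "x \<in> A0" for x
  proof (rule complex_nonneg_limit)
    show "(\<lambda>n. ip (mult (X n) x) x) \<longlonglongrightarrow> ip (mult \<xi> x) x"
      using tendsto_ip_mult_right[OF x lim] .
    show "0 \<le> ip (mult (X n) x) x" for n
      using A0_plus_subset_H_plus_w X x unfolding H_plus_w_def by blast
  qed
  then show "\<xi> \<in> H_plus_w A0 ip mult"
    unfolding H_plus_w_def by blast
qed

lemma A0_approximating_sequence: "\<exists>X. (\<forall>n. X n \<in> A0) \<and> (\<lambda>n. hnorm ip (X n - \<xi>)) \<longlonglongrightarrow> 0"
proof -
  have "\<forall>n. \<exists>x\<in>A0. hnorm ip (\<xi> - x) < inverse (real (Suc n))"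
    using A0_dense by simp
  then obtain X where X: "\<And>n. X n \<in> A0"
    and close: "\<And>n. hnorm ip (X n - \<xi>) < inverse (real (Suc n))"
    by (metis hnorm_minus_commute)
  have "(\<lambda>n. hnorm ip (X n - \<xi>)) \<longlonglongrightarrow> 0"
    using hnorm_nonneg less_imp_le[OF close]
    by (intro tendsto_sandwich[OF _ _ tendsto_const LIMSEQ_inverse_real_of_nat]
        always_eventually allI)
  with X show ?thesis
    by blast
qed

lemma norm_continuous_tendsto:
  assumes "norm_continuous ip f" and lim: "(\<lambda>n. hnorm ip (X n - \<xi>)) \<longlonglongrightarrow> 0"
  shows "(\<lambda>n. hnorm ip (f (X n) - f \<xi>)) \<longlonglongrightarrow> 0"
proof (rule LIMSEQ_I)
  fix e :: real assume "0 < e"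
  then obtain d where "0 < d" and d: "\<And>\<eta>. hnorm ip (\<eta> - \<xi>) < d \<Longrightarrow> hnorm ip (f \<eta> - f \<xi>) < e"
    using assms(1) unfolding norm_continuous_def by blast
  obtain N where "\<forall>n\<ge>N. norm (hnorm ip (X n - \<xi>) - 0) < d"
    using LIMSEQ_D[OF lim \<open>0 < d\<close>] by blast
  then have "\<forall>n\<ge>N. norm (hnorm ip (f (X n) - f \<xi>) - 0) < e"
    using d hnorm_nonneg by (simp add: abs_of_nonneg)
  then show "\<exists>N. \<forall>n\<ge>N. norm (hnorm ip (f (X n) - f \<xi>) - 0) < e" ..
qed

lemma H_plus_w_subset_H_plus:
  assumes "module_function A0 ip mult \<mu>" and "norm_continuous ip \<mu>"
    and "\<mu> ` A0 \<subseteq> A0_plus A0 mult invol"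
  shows "H_plus_w A0 ip mult \<subseteq> H_plus A0 ip mult invol"
proof
  fix \<xi> assume "\<xi> \<in> H_plus_w A0 ip mult"
  then have "\<mu> \<xi> = \<xi>"
    using assms(1) unfolding module_function_def by blast
  obtain X where "\<And>n. X n \<in> A0" and "(\<lambda>n. hnorm ip (X n - \<xi>)) \<longlonglongrightarrow> 0"
    using A0_approximating_sequence by blast
  then have "\<forall>n. \<mu> (X n) \<in> A0_plus A0 mult invol"
    and "(\<lambda>n. hnorm ip (\<mu> (X n) - \<xi>)) \<longlonglongrightarrow> 0"
    using assms(3) norm_continuous_tendsto[OF assms(2)] \<open>\<mu> \<xi> = \<xi>\<close> by fastforce+
  then show "\<xi> \<in> H_plus A0 ip mult invol"
    unfolding H_plus_def by (intro CollectI exI[of _ "\<lambda>n. \<mu> (X n)"]) simp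
qed

end

theorem mainTheorem17:
  fixes A0 :: "'h::ab_group_add set"
    and sc :: "complex \<Rightarrow> 'h \<Rightarrow> 'h"
    and ip :: "'h \<Rightarrow> 'h \<Rightarrow> complex"
    and mult :: "'h \<Rightarrow> 'h \<Rightarrow> 'h"
    and invol :: "'h \<Rightarrow> 'h"
    and \<mu> :: "'h \<Rightarrow> 'h"
  assumes "hilbert_quasi_star_algebra A0 sc ip mult invol"
    and "module_function A0 ip mult \<mu>"
    and "norm_continuous ip \<mu>"
    and "\<mu> ` A0 \<subseteq> A0_plus A0 mult invol"
  shows "H_plus A0 ip mult invol = H_plus_w A0 ip mult"
proof -
  interpret hilbert_quasi_star_algebra A0 sc ip mult invol
    by fact
  show ?thesis
    using H_plus_subset_H_plus_w H_plus_w_subset_H_plus[OF assms(2-4)] by (rule subset_antisym)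
qed

end
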